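(* Let $\Phi_1$ and $\Phi_2$ be two $\mathcal{C}^1$ convex growth functions with $\Phi_2\in\mathscr{U}$. Assume that $\Phi_1$ satisfies the $\nabla_2$-condition and that $\frac{\Phi_2}{\Phi_1}$ is nondecreasing. Let $\mu$ be a positive Borel measure on $\mathbb{C}_+$. Then the following assertions are equivalent. (a) There exists a constant $C_1>0$ such that for any interval $I\subset \mathbb{R}$, $\mu(Q_I)\le \dfrac{C_1}{\Phi_2\circ\Phi_1^{-1}\left(\frac{1}{|I|}\right)}$. (b) There exists a constant $C_2>0$ such that for any $f\in H^{\Phi_1}(\mathbb{C}_+)$, $f\neq 0$, $$\sup_{\lambda>0}\Phi_2(\lambda)\,\mu\left(\left\{z\in \mathbb{C}_+:\,|f(z)|>C_2\lambda\|f^\star\|_{L^{\Phi_1}}^{lux} \right\}\right)\le 1.$$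
   Context: $\mathbb{C}_+=\{x+iy: y>0\}$. A growth function is a continuous nondecreasing function from $[0,\infty)$ onto $[0,\infty)$; $\Phi^{-1}$ is its inverse. $\mathscr{U}^q$ ($q\ge1$) is the set of growth functions $\Phi$ with $\Phi(st)\le Ct^q\Phi(s)$ for $s>0,t\ge1$ and $t\mapsto\Phi(t)/t$ nondecreasing; $\mathscr{U}=\bigcup_{q\ge1}\mathscr{U}^q$. A convex growth function satisfies the $\nabla_2$-condition if both it and its complementary function $\Psi(s)=\sup_{t\ge0}\{ts-\Phi(t)\}$ satisfy $F(2t)\le KF(t)$ for some $K>1$, all $t\ge0$. $Q_I=\{x+iy:x\in I,0<y<|I|\}$. $\|g\|_{L^\Phi}^{lux}=\inf\{\lambda>0:\int_{\mathbb{R}}\Phi(|g|/\lambda)dx\le1\}$; $H^\Phi(\mathbb{C}_+)$: holomorphic $f$ with $\sup_{y>0}\|f(\cdot+iy)\|^{lux}_{L^\Phi}<\infty$. $f^\star(x)=\sup\{|f(t+iy)|: |t-x|<y\}$ is the nontangential maximal function. *)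

theory Defs
  imports "HOL-Analysis.Analysis"
begin

definition upper_half_plane :: "complex set" where
  "upper_half_plane = {z. Im z > 0}"

definition growth_function :: "(real \<Rightarrow> real) \<Rightarrow> bool" where
  "growth_function \<Phi> \<longleftrightarrow> continuous_on {0..} \<Phi> \<and> mono_on {0..} \<Phi> \<and> \<Phi> ` {0..} = {0..}"

text \<open>Inverse of a growth function (unique on the positive reals for convex growth functions).\<close>
definition growth_inv :: "(real \<Rightarrow> real) \<Rightarrow> real \<Rightarrow> real" where
  "growth_inv \<Phi> s = (SOME t. t \<ge> 0 \<and> \<Phi> t = s)"

definition C1_on_nonneg :: "(real \<Rightarrow> real) \<Rightarrow> bool" where
  "C1_on_nonneg \<Phi> \<longleftrightarrow> (\<exists>\<Phi>'. continuous_on {0..} \<Phi>' \<and>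
      (\<forall>t\<ge>0. (\<Phi> has_real_derivative \<Phi>' t) (at t within {0..})))"

definition class_U_q :: "real \<Rightarrow> (real \<Rightarrow> real) \<Rightarrow> bool" where
  "class_U_q q \<Phi> \<longleftrightarrow> growth_function \<Phi> \<and>
      (\<exists>C>0. \<forall>s>0. \<forall>t\<ge>1. \<Phi> (s * t) \<le> C * t powr q * \<Phi> s) \<and>
      mono_on {0<..} (\<lambda>t. \<Phi> t / t)"

definition class_U :: "(real \<Rightarrow> real) \<Rightarrow> bool" where
  "class_U \<Phi> \<longleftrightarrow> (\<exists>q\<ge>1. class_U_q q \<Phi>)"

definition complementary :: "(real \<Rightarrow> real) \<Rightarrow> real \<Rightarrow> ereal" where
  "complementary \<Phi> s = (SUP t\<in>{0..}. ereal (t * s - \<Phi> t))"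

definition doubling_ereal :: "(real \<Rightarrow> ereal) \<Rightarrow> bool" where
  "doubling_ereal F \<longleftrightarrow> (\<exists>K>1. \<forall>t\<ge>0. F (2 * t) \<le> ereal K * F t)"

definition nabla2 :: "(real \<Rightarrow> real) \<Rightarrow> bool" where
  "nabla2 \<Phi> \<longleftrightarrow> doubling_ereal (\<lambda>t. ereal (\<Phi> t)) \<and> doubling_ereal (complementary \<Phi>)"

text \<open>Carleson box over I, of side length len = |I|.\<close>
definition carleson_box :: "real set \<Rightarrow> real \<Rightarrow> complex set" where
  "carleson_box I len = {z. Re z \<in> I \<and> 0 < Im z \<and> Im z < len}"

definition lux_norm :: "(real \<Rightarrow> real) \<Rightarrow> (real \<Rightarrow> ereal) \<Rightarrow> ereal" where
  "lux_norm \<Phi> g = Inf {ereal l | l. l > 0 \<and>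
      (\<integral>\<^sup>+ x. (if g x = \<infinity> then \<infinity> else ennreal (\<Phi> (real_of_ereal \<bar>g x\<bar> / l))) \<partial>lborel) \<le> 1}"

definition lux :: "(real \<Rightarrow> real) \<Rightarrow> (real \<Rightarrow> complex) \<Rightarrow> ereal" where
  "lux \<Phi> g = lux_norm \<Phi> (\<lambda>x. ereal (norm (g x)))"

definition hardy_orlicz :: "(real \<Rightarrow> real) \<Rightarrow> (complex \<Rightarrow> complex) set" where
  "hardy_orlicz \<Phi> = {f. f holomorphic_on upper_half_plane \<and>
      (SUP y\<in>{0<..}. lux \<Phi> (\<lambda>x. f (complex_of_real x + \<i> * complex_of_real y))) < \<infinity>}"

definition nontangential_max :: "(complex \<Rightarrow> complex) \<Rightarrow> real \<Rightarrow> ereal" where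
  "nontangential_max f x = (SUP p\<in>{(t, y). y > 0 \<and> \<bar>t - x\<bar> < y}.
      ereal (norm (f (Complex (fst p) (snd p)))))"

end

theory Submission
  imports Defs
begin

text \<open>(a) \<Longrightarrow> (b): the level set \<open>{|f| > \<lambda>}\<close> lies in the tent over the open set \<open>U = {f\<^sup>\<star> > \<lambda>}\<close>.
  Chebyshev's inequality for the Luxemburg norm bounds \<open>|U|\<close>, the tent is covered by the Carleson
  boxes over the components of \<open>U\<close>, and since \<open>t \<mapsto> t \<Phi>\<^sub>2(\<Phi>\<^sub>1\<^sup>-\<^sup>1(1/t))\<close> is nonincreasing the Carleson
  bounds of the boxes add up to \<open>\<mu>(tent U) \<le> C\<^sub>1 / \<Phi>\<^sub>2(\<Phi>\<^sub>1\<^sup>-\<^sup>1(1/|U|))\<close>.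

  (b) \<Longrightarrow> (a): test (b) with \<open>f(z) = A L\<^sup>2 / (z - x\<^sub>0 + iL)\<^sup>2\<close>, where \<open>I\<close> has centre \<open>x\<^sub>0\<close> and length \<open>L\<close>
  and \<open>\<Phi>\<^sub>1(A) = 1/L\<close>. Then \<open>|f| \<ge> 4A/17\<close> on \<open>Q\<^sub>I\<close>, while \<open>f\<^sup>\<star>\<close> and \<open>f\<close> on horizontal lines are dominated by
  multiples of \<open>A\<close> times a Cauchy kernel of mass \<open>\<pi>L\<close>, so their Luxemburg norms are bounded by absolute
  constants; the upper growth of \<open>\<Phi>\<^sub>2 \<in> \<U>\<close> turns the level \<open>\<lambda> \<approx> A\<close> into the bound \<open>1/\<Phi>\<^sub>2(A)\<close>.\<close>

section \<open>Growth functions\<close>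

lemma growth_function_nonneg:
  assumes "growth_function \<Phi>" "t \<ge> 0"
  shows "\<Phi> t \<ge> 0"
  using assms unfolding growth_function_def by auto

lemma growth_function_mono:
  assumes "growth_function \<Phi>" "0 \<le> s" "s \<le> t"
  shows "\<Phi> s \<le> \<Phi> t"
  using assms unfolding growth_function_def by (auto intro: mono_onD)

lemma growth_function_zero:
  assumes "growth_function \<Phi>"
  shows "\<Phi> 0 = 0"
proof -
  obtain t where "t \<ge> 0" "\<Phi> t = 0"
    using assms unfolding growth_function_def by (metis atLeast_iff image_iff order_refl)
  then show ?thesis
    using growth_function_mono[OF assms, of 0 t] growth_function_nonneg[OF assms, of 0] by simp
qed

lemma growth_inv_nonneg:
  assumes "growth_function \<Phi>" "s \<ge> 0"
  shows "growth_inv \<Phi> s \<ge> 0"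
    and growth_inv_inverse: "\<Phi> (growth_inv \<Phi> s) = s"
proof -
  have "\<exists>t. t \<ge> 0 \<and> \<Phi> t = s"
    using assms unfolding growth_function_def by force
  then have "growth_inv \<Phi> s \<ge> 0 \<and> \<Phi> (growth_inv \<Phi> s) = s"
    unfolding growth_inv_def by (rule someI_ex)
  then show "growth_inv \<Phi> s \<ge> 0" "\<Phi> (growth_inv \<Phi> s) = s" by auto
qed

lemma growth_inv_pos:
  assumes "growth_function \<Phi>" "s > 0"
  shows "growth_inv \<Phi> s > 0"
  using growth_inv_nonneg[OF assms(1)] growth_inv_inverse[OF assms(1)] growth_function_zero[OF assms(1)]
    assms(2) by (metis less_eq_real_def order_less_irrefl)

lemma growth_function_pos_if_doubling:
  assumes \<Phi>: "growth_function \<Phi>" and doubling: "\<And>t. t > 0 \<Longrightarrow> \<Phi> (2 * t) \<le> K * \<Phi> t"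
    and "t > 0"
  shows "\<Phi> t > 0"
proof (rule ccontr)
  assume "\<not> \<Phi> t > 0"
  then have "\<Phi> t = 0" using growth_function_nonneg[OF \<Phi>, of t] \<open>t > 0\<close> by simp
  have vanish: "\<Phi> (2 ^ n * t) = 0" for n :: nat
  proof (induction n)
    case (Suc n)
    have "\<Phi> (2 * (2 ^ n * t)) \<le> 0" using doubling[of "2 ^ n * t"] Suc \<open>t > 0\<close> by simp
    then show ?case using growth_function_nonneg[OF \<Phi>, of "2 ^ Suc n * t"] \<open>t > 0\<close> by (simp add: mult.assoc)
  qed (use \<open>\<Phi> t = 0\<close> in simp)
  obtain s where s: "s \<ge> 0" "\<Phi> s = 1"
    using \<Phi> unfolding growth_function_def by (metis atLeast_iff image_iff zero_le_one)
  obtain n :: nat where "s / t < 2 ^ n" using real_arch_pow[of 2 "s / t"] by auto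
  then have "s \<le> 2 ^ n * t" using \<open>t > 0\<close> by (simp add: field_simps)
  then show False using growth_function_mono[OF \<Phi> s(1)] vanish[of n] s(2) by fastforce
qed

lemma nabla2_pos:
  assumes "growth_function \<Phi>" "nabla2 \<Phi>" "t > 0"
  shows "\<Phi> t > 0"
proof -
  obtain K where "\<And>t. t \<ge> 0 \<Longrightarrow> ereal (\<Phi> (2 * t)) \<le> ereal K * ereal (\<Phi> t)"
    using assms(2) unfolding nabla2_def doubling_ereal_def by auto
  then have "\<And>t. t > 0 \<Longrightarrow> \<Phi> (2 * t) \<le> K * \<Phi> t" by fastforce
  then show ?thesis by (rule growth_function_pos_if_doubling[OF assms(1) _ assms(3)])
qed

lemma class_U_growth_function: "class_U \<Phi> \<Longrightarrow> growth_function \<Phi>"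
  unfolding class_U_def class_U_q_def by blast

lemma class_U_mono_divide: "class_U \<Phi> \<Longrightarrow> mono_on {0<..} (\<lambda>t. \<Phi> t / t)"
  unfolding class_U_def class_U_q_def by blast

lemma class_U_pos:
  assumes "class_U \<Phi>" "t > 0"
  shows "\<Phi> t > 0"
proof -
  obtain C q where "\<And>s t. s > 0 \<Longrightarrow> t \<ge> 1 \<Longrightarrow> \<Phi> (s * t) \<le> C * t powr q * \<Phi> s"
    using assms(1) unfolding class_U_def class_U_q_def by blast
  then have "\<And>t. t > 0 \<Longrightarrow> \<Phi> (2 * t) \<le> (C * 2 powr q) * \<Phi> t"
    by (metis mult.commute one_le_numeral)
  then show ?thesis
    by (rule growth_function_pos_if_doubling[OF class_U_growth_function[OF assms(1)] _ assms(2)])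
qed

lemma superlinear_lower_bound:
  fixes \<Phi> :: "real \<Rightarrow> real"
  assumes "mono_on {0<..} (\<lambda>t. \<Phi> t / t)" "s > 0" "t \<ge> 1"
  shows "t * \<Phi> s \<le> \<Phi> (s * t)"
proof -
  have "s \<le> s * t" using assms(2,3) mult_left_mono[of 1 t s] by simp
  then have "\<Phi> s / s \<le> \<Phi> (s * t) / (s * t)" using mono_onD[OF assms(1), of s "s * t"] assms(2) by simp
  then show ?thesis using assms(2,3) by (simp add: field_simps)
qed

lemma convex_on_scale_le:
  fixes \<Phi> :: "real \<Rightarrow> real"
  assumes "convex_on {0..} \<Phi>" "\<Phi> 0 = 0" "0 \<le> \<theta>" "\<theta> \<le> 1" "t \<ge> 0"
  shows "\<Phi> (\<theta> * t) \<le> \<theta> * \<Phi> t"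
  using convex_onD[OF assms(1), of \<theta> 0 t] assms(2-5) by simp

lemma convex_growth_function_strict_mono:
  assumes \<Phi>: "growth_function \<Phi>" "convex_on {0..} \<Phi>" and pos: "\<And>t. t > 0 \<Longrightarrow> \<Phi> t > 0"
  shows "strict_mono_on {0..} \<Phi>"
proof (rule strict_mono_onI)
  fix s t :: real assume "s \<in> {0..}" "t \<in> {0..}" "s < t"
  then have "\<Phi> ((s / t) * t) \<le> (s / t) * \<Phi> t"
    by (intro convex_on_scale_le[OF \<Phi>(2) growth_function_zero[OF \<Phi>(1)]]) auto
  also have "\<dots> < \<Phi> t" using \<open>s \<in> {0..}\<close> \<open>s < t\<close> pos[of t] by (simp add: field_simps)
  finally show "\<Phi> s < \<Phi> t" using \<open>s < t\<close> \<open>s \<in> {0..}\<close> by simp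
qed

lemma le_growth_inv_iff:
  assumes "growth_function \<Phi>" "strict_mono_on {0..} \<Phi>" "t \<ge> 0" "s \<ge> 0"
  shows "t \<le> growth_inv \<Phi> s \<longleftrightarrow> \<Phi> t \<le> s"
  using strict_mono_on_leD[OF assms(2)] strict_mono_on_less[OF assms(2)]
    growth_inv_nonneg[OF assms(1,4)] growth_inv_inverse[OF assms(1,4)] assms(3)
  by (metis atLeast_iff not_le)

text \<open>Writing \<open>v = \<Phi>\<^sub>1\<^sup>-\<^sup>1(1/t)\<close>, the product below equals \<open>\<Phi>\<^sub>2 v / \<Phi>\<^sub>1 v\<close>, and \<open>v\<close> decreases
  as \<open>t\<close> increases.\<close>
lemma carleson_gauge_antimono:
  assumes \<Phi>1: "growth_function \<Phi>1" "strict_mono_on {0..} \<Phi>1"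
    and ratio: "mono_on {0<..} (\<lambda>t. \<Phi>2 t / \<Phi>1 t)"
    and "0 < x" "x \<le> S"
  shows "S * \<Phi>2 (growth_inv \<Phi>1 (1 / S)) \<le> x * \<Phi>2 (growth_inv \<Phi>1 (1 / x))"
proof -
  define vx vS where "vx = growth_inv \<Phi>1 (1 / x)" and "vS = growth_inv \<Phi>1 (1 / S)"
  have "vS > 0" "\<Phi>1 vS = 1 / S" "\<Phi>1 vx = 1 / x"
    unfolding vx_def vS_def using assms(4,5) growth_inv_pos[OF \<Phi>1(1)] growth_inv_inverse[OF \<Phi>1(1)]
    by auto
  moreover have "vS \<le> vx"
    unfolding vx_def using le_growth_inv_iff[OF \<Phi>1, of vS "1 / x"] \<open>vS > 0\<close> \<open>\<Phi>1 vS = 1 / S\<close> assms(4,5)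
    by (simp add: frac_le)
  ultimately have "\<Phi>2 vS / \<Phi>1 vS \<le> \<Phi>2 vx / \<Phi>1 vx" by (intro mono_onD[OF ratio]) auto
  with \<open>\<Phi>1 vS = 1 / S\<close> \<open>\<Phi>1 vx = 1 / x\<close> show ?thesis unfolding vx_def vS_def by (simp add: mult.commute)
qed

lemma scaled_level_le_carleson_gauge:
  assumes \<Phi>1: "growth_function \<Phi>1" "strict_mono_on {0..} \<Phi>1" and \<Phi>2: "class_U \<Phi>2"
    and "l > 0" "S > 0" "\<Phi>1 (l * max 1 C) * S \<le> 1"
  shows "C * \<Phi>2 l \<le> \<Phi>2 (growth_inv \<Phi>1 (1 / S))"
proof -
  have "\<Phi>1 (l * max 1 C) \<le> 1 / S" using assms(5,6) by (simp add: pos_le_divide_eq)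
  then have le: "l * max 1 C \<le> growth_inv \<Phi>1 (1 / S)"
    using le_growth_inv_iff[OF \<Phi>1] \<open>l > 0\<close> \<open>S > 0\<close> by simp
  have "C * \<Phi>2 l \<le> max 1 C * \<Phi>2 l" using class_U_pos[OF \<Phi>2 \<open>l > 0\<close>] by (simp add: mult_right_mono)
  also have "\<dots> \<le> \<Phi>2 (l * max 1 C)"
    using class_U_mono_divide[OF \<Phi>2] \<open>l > 0\<close> by (rule superlinear_lower_bound) simp
  also have "\<dots> \<le> \<Phi>2 (growth_inv \<Phi>1 (1 / S))"
    using class_U_growth_function[OF \<Phi>2] \<open>l > 0\<close> le by (simp add: growth_function_mono)
  finally show ?thesis .
qed

section \<open>The Luxemburg norm\<close>

lemma ennreal_mult_le_1_iff:
  assumes "p > 0"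
  shows "ennreal p * x \<le> 1 \<longleftrightarrow> x \<le> ennreal (1 / p)"
proof
  assume "ennreal p * x \<le> 1"
  then have "ennreal (1 / p) * (ennreal p * x) \<le> ennreal (1 / p)" using mult_left_mono by fastforce
  then show "x \<le> ennreal (1 / p)" using assms by (simp add: mult.assoc[symmetric] flip: ennreal_mult)
next
  assume "x \<le> ennreal (1 / p)"
  then have "ennreal p * x \<le> ennreal p * ennreal (1 / p)" by (rule mult_left_mono) simp
  then show "ennreal p * x \<le> 1" using assms by (simp flip: ennreal_mult)
qed

definition orlicz_modular :: "(real \<Rightarrow> real) \<Rightarrow> (real \<Rightarrow> ereal) \<Rightarrow> real \<Rightarrow> ennreal" where
  "orlicz_modular \<Phi> g l =
     (\<integral>\<^sup>+ x. (if g x = \<infinity> then \<infinity> else ennreal (\<Phi> (real_of_ereal \<bar>g x\<bar> / l))) \<partial>lborel)"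

lemma lux_norm_eq_Inf_modular:
  "lux_norm \<Phi> g = Inf {ereal l | l. l > 0 \<and> orlicz_modular \<Phi> g l \<le> 1}"
  unfolding lux_norm_def orlicz_modular_def ..

lemma lux_norm_le:
  assumes "l > 0" "orlicz_modular \<Phi> g l \<le> 1"
  shows "lux_norm \<Phi> g \<le> ereal l"
  unfolding lux_norm_eq_Inf_modular by (rule Inf_lower) (use assms in auto)

lemma lux_norm_chebyshev:
  assumes \<Phi>: "growth_function \<Phi>" and "lux_norm \<Phi> g < ereal a"
    and S: "S \<in> sets lborel" and "r \<ge> 0" and above: "\<And>x. x \<in> S \<Longrightarrow> g x \<ge> ereal r"
  shows "ennreal (\<Phi> (r / a)) * emeasure lborel S \<le> 1"
proof -
  obtain l where l: "l > 0" "l < a" and modular: "orlicz_modular \<Phi> g l \<le> 1"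
    using assms(2) unfolding lux_norm_eq_Inf_modular by (auto simp: Inf_less_iff)
  have "ennreal (\<Phi> (r / a)) * emeasure lborel S = (\<integral>\<^sup>+ x. ennreal (\<Phi> (r / a)) * indicator S x \<partial>lborel)"
    using S by (simp add: nn_integral_cmult_indicator)
  also have "\<dots> \<le> orlicz_modular \<Phi> g l"
    unfolding orlicz_modular_def
  proof (intro nn_integral_mono)
    fix x
    show "ennreal (\<Phi> (r / a)) * indicator S x
        \<le> (if g x = \<infinity> then \<infinity> else ennreal (\<Phi> (real_of_ereal \<bar>g x\<bar> / l)))"
    proof (cases "x \<in> S \<and> g x \<noteq> \<infinity>")
      case True
      then obtain v where v: "g x = ereal v" "r \<le> v" using above[of x] by (cases "g x") auto
      have "r / a \<le> v / l" using l v(2) \<open>r \<ge> 0\<close> by (simp add: frac_le)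
      then have "\<Phi> (r / a) \<le> \<Phi> (v / l)" using l \<open>r \<ge> 0\<close> by (intro growth_function_mono[OF \<Phi>]) auto
      then show ?thesis using True v \<open>r \<ge> 0\<close> by (simp add: ennreal_leI)
    qed (auto simp: indicator_def)
  qed
  finally show ?thesis using modular by simp
qed

lemma lux_norm_pos:
  assumes \<Phi>: "growth_function \<Phi>" and S: "S \<in> sets lborel" "emeasure lborel S = ennreal s" "s > 0"
    and "r > 0" and above: "\<And>x. x \<in> S \<Longrightarrow> g x \<ge> ereal r"
  shows "lux_norm \<Phi> g > 0"
proof (rule ccontr)
  assume "\<not> lux_norm \<Phi> g > 0"
  define t where "t = growth_inv \<Phi> (2 / s)"
  have "t > 0" "\<Phi> t = 2 / s"
    unfolding t_def using growth_inv_pos[OF \<Phi>] growth_inv_inverse[OF \<Phi>] \<open>s > 0\<close> by auto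
  then have "lux_norm \<Phi> g < ereal (r / t)"
    using \<open>\<not> lux_norm \<Phi> g > 0\<close> \<open>r > 0\<close> by (metis divide_pos_pos ereal_less(2) not_le order_le_less_trans)
  from lux_norm_chebyshev[OF \<Phi> this S(1) _ above] have "ennreal (\<Phi> t) * ennreal s \<le> 1"
    using \<open>r > 0\<close> \<open>t > 0\<close> S(2) by simp
  then show False using \<open>\<Phi> t = 2 / s\<close> \<open>s > 0\<close> by (simp flip: ennreal_mult add: ennreal_le_1)
qed

definition cauchy_bump :: "real \<Rightarrow> real \<Rightarrow> real \<Rightarrow> real" where
  "cauchy_bump L x0 x = L\<^sup>2 / ((x - x0)\<^sup>2 + L\<^sup>2)"

lemma cauchy_bump_nonneg: "cauchy_bump L x0 x \<ge> 0"
  unfolding cauchy_bump_def by simp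

lemma cauchy_bump_le_1: "cauchy_bump L x0 x \<le> 1"
  unfolding cauchy_bump_def by (cases "L = 0") (simp_all add: add_nonneg_pos)

lemma borel_measurable_cauchy_bump [measurable]: "cauchy_bump L x0 \<in> borel_measurable borel"
  unfolding cauchy_bump_def by measurable

lemma nn_integral_inverse_1_plus_square_le:
  "(\<integral>\<^sup>+x. ennreal (1 / (1 + x\<^sup>2)) \<partial>lborel) \<le> ennreal pi"
proof -
  let ?f = "\<lambda>x::real. ennreal (1 / (1 + x\<^sup>2))"
  have half: "(\<integral>\<^sup>+x. ?f x * indicator {0..} x \<partial>lborel) = ennreal (pi / 2)"
  proof (subst nn_integral_FTC_atLeast[where F = arctan and T = "pi / 2"])
    show "(arctan \<longlongrightarrow> pi / 2) at_top" by (rule tendsto_arctan_at_top)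
  qed (auto intro!: derivative_eq_intros simp: add_nonneg_eq_0_iff field_simps power2_eq_square)
  have "(\<integral>\<^sup>+x. ?f x \<partial>lborel)
      = (\<integral>\<^sup>+x. ?f x * indicator {0..} x \<partial>lborel) + (\<integral>\<^sup>+x. ?f x * indicator {..<0} x \<partial>lborel)"
    by (subst nn_integral_add[symmetric]) (auto intro!: nn_integral_cong split: split_indicator)
  also have "(\<integral>\<^sup>+x. ?f x * indicator {..<0} x \<partial>lborel)
      = (\<integral>\<^sup>+x. ?f (0 + (-1) * x) * indicator {..<0} (0 + (-1) * x) \<partial>lborel)"
    using nn_integral_real_affine[of "\<lambda>x. ?f x * indicator {..<0} x" "-1" 0] by simp
  also have "\<dots> \<le> (\<integral>\<^sup>+x. ?f x * indicator {0..} x \<partial>lborel)"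
    by (intro nn_integral_mono) (auto split: split_indicator)
  finally have "(\<integral>\<^sup>+x. ?f x \<partial>lborel) \<le> ennreal (pi / 2) + ennreal (pi / 2)"
    using half by (metis add_left_mono)
  then show ?thesis by (simp flip: ennreal_plus)
qed

lemma nn_integral_cauchy_bump_le:
  assumes "L > 0"
  shows "(\<integral>\<^sup>+x. ennreal (cauchy_bump L x0 x) \<partial>lborel) \<le> ennreal (pi * L)"
proof -
  have rescale: "cauchy_bump L x0 (x0 + L * x) = 1 / (1 + x\<^sup>2)" for x
  proof -
    have "(x0 + L * x - x0)\<^sup>2 + L\<^sup>2 = L\<^sup>2 * (1 + x\<^sup>2)" by (simp add: algebra_simps power2_eq_square)
    then show ?thesis unfolding cauchy_bump_def using assms by simp
  qed
  have "(\<integral>\<^sup>+x. ennreal (cauchy_bump L x0 x) \<partial>lborel)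
      = ennreal L * (\<integral>\<^sup>+x. ennreal (1 / (1 + x\<^sup>2)) \<partial>lborel)"
    using nn_integral_real_affine[of "\<lambda>x. ennreal (cauchy_bump L x0 x)" L x0] assms
    by (simp add: rescale measurable)
  also have "\<dots> \<le> ennreal L * ennreal pi"
    by (intro mult_left_mono nn_integral_inverse_1_plus_square_le) simp
  finally show ?thesis using assms by (simp flip: ennreal_mult add: mult.commute)
qed

text \<open>If \<open>\<Phi> A = 1/L\<close>, convexity gives \<open>\<Phi>(A k / 4) \<le> k / (4 L)\<close> for \<open>0 \<le> k \<le> 1\<close>, and the Cauchy
  bump has integral \<open>\<pi> L < 4 L\<close>.\<close>
lemma lux_norm_le_cauchy_bump:
  assumes \<Phi>: "growth_function \<Phi>" "convex_on {0..} \<Phi>"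
    and "L > 0" "A \<ge> 0" "\<Phi> A = 1 / L" "M > 0"
    and bound: "\<And>x. 0 \<le> g x \<and> g x \<le> ereal (M * A * cauchy_bump L x0 x)"
  shows "lux_norm \<Phi> g \<le> ereal (4 * M)"
proof (rule lux_norm_le)
  let ?k = "cauchy_bump L x0"
  have pointwise: "(if g x = \<infinity> then \<infinity> else ennreal (\<Phi> (real_of_ereal \<bar>g x\<bar> / (4 * M))))
      \<le> ennreal (1 / (4 * L)) * ennreal (?k x)" for x
  proof -
    obtain v where v: "g x = ereal v" "0 \<le> v" "v \<le> M * A * ?k x"
      using bound[of x] by (cases "g x") auto
    have "\<Phi> (v / (4 * M)) \<le> \<Phi> ((?k x / 4) * A)"
      using v \<open>M > 0\<close> \<open>A \<ge> 0\<close> by (intro growth_function_mono[OF \<Phi>(1)]) (auto simp: field_simps)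
    also have "\<dots> \<le> (?k x / 4) * \<Phi> A"
      using cauchy_bump_nonneg[of L x0 x] cauchy_bump_le_1[of L x0 x] \<open>A \<ge> 0\<close>
      by (intro convex_on_scale_le[OF \<Phi>(2) growth_function_zero[OF \<Phi>(1)]]) auto
    also have "\<dots> = 1 / (4 * L) * ?k x" using \<open>\<Phi> A = 1 / L\<close> by simp
    finally show ?thesis using v \<open>L > 0\<close> cauchy_bump_nonneg[of L x0 x]
      by (simp add: ennreal_leI flip: ennreal_mult)
  qed
  have "orlicz_modular \<Phi> g (4 * M) \<le> (\<integral>\<^sup>+ x. ennreal (1 / (4 * L)) * ennreal (?k x) \<partial>lborel)"
    unfolding orlicz_modular_def by (intro nn_integral_mono pointwise)
  also have "\<dots> = ennreal (1 / (4 * L)) * (\<integral>\<^sup>+ x. ennreal (?k x) \<partial>lborel)"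
    by (rule nn_integral_cmult) simp
  also have "\<dots> \<le> ennreal (1 / (4 * L)) * ennreal (pi * L)"
    by (intro mult_left_mono nn_integral_cauchy_bump_le \<open>L > 0\<close>) simp
  also have "\<dots> = ennreal (pi / 4)" using \<open>L > 0\<close> by (simp flip: ennreal_mult)
  also have "\<dots> \<le> 1" using pi_less_4 by (simp add: ennreal_le_1)
  finally show "orlicz_modular \<Phi> g (4 * M) \<le> 1" .
qed (use \<open>M > 0\<close> in simp)

section \<open>Open subsets of the real line\<close>

lemma interval_finite_measure_bdd:
  fixes C :: "real set"
  assumes C: "is_interval C" "c \<in> C" and finite: "emeasure lborel C < \<infinity>"
  shows "bdd_above C" "bdd_below C"
proof -
  obtain m where m: "emeasure lborel C = ennreal m" "m \<ge> 0"
    using finite by (cases "emeasure lborel C") auto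
  have short: "y - x \<le> m" if "x \<in> C" "y \<in> C" "x \<le> y" for x y
  proof -
    have "{x..y} \<subseteq> C" using mem_is_interval_1_I[OF C(1) that(1,2)] by auto
    then have "emeasure lborel {x..y} \<le> emeasure lborel C"
      using real_interval_borel_measurable[OF C(1)] by (intro emeasure_mono) auto
    then show ?thesis using m that(3) by (auto simp: ennreal_le_iff2)
  qed
  show "bdd_above C" using short[OF C(2)] m(2) by (intro bdd_aboveI[of _ "c + m"]) (smt (verit))
  show "bdd_below C" using short[OF _ C(2)] m(2) by (intro bdd_belowI[of _ "c - m"]) (smt (verit))
qed

lemma open_interval_finite_measure:
  fixes C :: "real set"
  assumes C: "is_interval C" "open C" "C \<noteq> {}" and finite: "emeasure lborel C < \<infinity>"
  shows "Inf C < Sup C" "{Inf C<..<Sup C} \<subseteq> C" "C \<subseteq> {Inf C..Sup C}"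
    and "emeasure lborel C = ennreal (Sup C - Inf C)"
proof -
  obtain c where "c \<in> C" using C(3) by auto
  note bdd = interval_finite_measure_bdd[OF C(1) \<open>c \<in> C\<close> finite]
  obtain e where "e > 0" "ball c e \<subseteq> C" using C(2) \<open>c \<in> C\<close> open_contains_ball by blast
  then have "c - e / 2 \<in> C" "c + e / 2 \<in> C" by (auto simp: dist_real_def subset_iff)
  then have "Inf C \<le> c - e / 2" "c + e / 2 \<le> Sup C"
    using cInf_lower[OF _ bdd(2)] cSup_upper[OF _ bdd(1)] by blast+
  then show less: "Inf C < Sup C" using \<open>e > 0\<close> by simp
  show inner: "{Inf C<..<Sup C} \<subseteq> C"
  proof
    fix x assume "x \<in> {Inf C<..<Sup C}"
    then obtain y1 y2 where "y1 \<in> C" "y1 < x" "y2 \<in> C" "x < y2"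
      using cInf_lessD[OF C(3)] less_cSupD[OF C(3)] by (metis greaterThanLessThan_iff)
    then show "x \<in> C" using mem_is_interval_1_I[OF C(1)] by (meson less_imp_le)
  qed
  show outer: "C \<subseteq> {Inf C..Sup C}" using cInf_lower[OF _ bdd(2)] cSup_upper[OF _ bdd(1)] by auto
  have "emeasure lborel {Inf C<..<Sup C} \<le> emeasure lborel C" "emeasure lborel C \<le> emeasure lborel {Inf C..Sup C}"
    using inner outer C(2) by (auto intro!: emeasure_mono)
  then show "emeasure lborel C = ennreal (Sup C - Inf C)" using less by simp
qed

lemma countable_components:
  fixes U :: "'a::euclidean_space set"
  assumes "open U"
  shows "countable (components U)"
proof (rule countable_disjoint_open_subsets)
  show "pairwise disjnt (components U)"
    using pairwise_disjoint_components[of U] unfolding pairwise_def disjnt_def by blast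
qed (rule open_components[OF assms])

lemma component_finite_measure_interval:
  fixes U :: "real set"
  assumes U: "open U" "emeasure lborel U < \<infinity>" and C: "C \<in> components U"
  shows "Inf C < Sup C" "{Inf C<..<Sup C} \<subseteq> C" "C \<subseteq> {Inf C..Sup C}"
    and "emeasure lborel C = ennreal (Sup C - Inf C)"
proof -
  have "is_interval C" using in_components_connected[OF C] is_interval_connected_1 by blast
  moreover have "open C" using open_components[OF U(1) C] .
  moreover have "C \<noteq> {}" using in_components_nonempty[OF C] .
  moreover have "emeasure lborel C \<le> emeasure lborel U"
    using in_components_subset[OF C] U(1) by (intro emeasure_mono) auto
  then have "emeasure lborel C < \<infinity>" using U(2) by simp
  ultimately show "Inf C < Sup C" "{Inf C<..<Sup C} \<subseteq> C" "C \<subseteq> {Inf C..Sup C}"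
    and "emeasure lborel C = ennreal (Sup C - Inf C)"
    using open_interval_finite_measure by blast+
qed

lemma nn_integral_components_emeasure:
  fixes U :: "'a::euclidean_space set"
  assumes "open U"
  shows "(\<integral>\<^sup>+I. emeasure lborel I \<partial>count_space (components U)) = emeasure lborel U"
proof -
  have "disjoint_family_on (\<lambda>I. I) (components U)"
    using components_nonoverlap unfolding disjoint_family_on_def by blast
  then show ?thesis
    using emeasure_UN_countable[of "components U" "\<lambda>I. I" lborel] countable_components[OF assms]
      open_components[OF assms] by simp
qed

section \<open>Nontangential maximal functions, Carleson boxes and tents\<close>

lemma nontangential_max_ge:
  assumes "y > 0" "\<bar>t - x\<bar> < y"
  shows "ereal (norm (f (Complex t y))) \<le> nontangential_max f x"
  unfolding nontangential_max_def by (rule SUP_upper2[where i = "(t, y)"]) (use assms in auto)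

lemma nontangential_max_nonneg: "nontangential_max f x \<ge> 0"
  using nontangential_max_ge[of 1 x x f] by (simp add: order_trans[rotated])

lemma interval_subset_nontangential_max_level:
  assumes "y > 0" "c < ereal (norm (f (Complex t y)))"
  shows "{t - y<..<t + y} \<subseteq> {x. c < nontangential_max f x}"
proof
  fix x assume "x \<in> {t - y<..<t + y}"
  then have "ereal (norm (f (Complex t y))) \<le> nontangential_max f x"
    using nontangential_max_ge[of y t x f] \<open>y > 0\<close> by (simp add: abs_less_iff)
  then show "x \<in> {x. c < nontangential_max f x}" using assms(2) by simp
qed

lemma open_nontangential_max_level: "open {x. c < nontangential_max f x}"
proof (subst open_subopen, intro ballI)
  fix x assume "x \<in> {x. c < nontangential_max f x}"
  then obtain t y where "y > 0" "\<bar>t - x\<bar> < y" "c < ereal (norm (f (Complex t y)))"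
    unfolding nontangential_max_def by (auto simp: less_SUP_iff)
  then show "\<exists>T. open T \<and> x \<in> T \<and> T \<subseteq> {x. c < nontangential_max f x}"
    using interval_subset_nontangential_max_level[of y c f t]
    by (intro exI[of _ "{t - y<..<t + y}"]) (auto simp: abs_less_iff)
qed

lemma lux_norm_nontangential_max_pos:
  assumes "growth_function \<Phi>" "z0 \<in> upper_half_plane" "f z0 \<noteq> 0"
  shows "lux_norm \<Phi> (nontangential_max f) > 0"
proof (rule lux_norm_pos[OF assms(1)])
  show "{Re z0 - Im z0<..<Re z0 + Im z0} \<in> sets lborel" by simp
  show "emeasure lborel {Re z0 - Im z0<..<Re z0 + Im z0} = ennreal (2 * Im z0)"
    using assms(2) unfolding upper_half_plane_def by simp
  show "2 * Im z0 > 0" "norm (f z0) > 0" using assms(2,3) unfolding upper_half_plane_def by auto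
  show "ereal (norm (f z0)) \<le> nontangential_max f x" if "x \<in> {Re z0 - Im z0<..<Re z0 + Im z0}" for x
    using nontangential_max_ge[of "Im z0" "Re z0" x f] that \<open>2 * Im z0 > 0\<close> by (simp add: abs_less_iff)
qed

lemma nontangential_max_level_measure:
  assumes "growth_function \<Phi>" "lux_norm \<Phi> (nontangential_max f) = ereal n" "n > 0" "u \<ge> 0"
  shows "ennreal (\<Phi> u) * emeasure lborel {x. ereal (2 * n * u) < nontangential_max f x} \<le> 1"
proof -
  have "ennreal (\<Phi> (2 * n * u / (2 * n))) * emeasure lborel {x. ereal (2 * n * u) < nontangential_max f x} \<le> 1"
    using assms(2-4) open_nontangential_max_level
    by (intro lux_norm_chebyshev[OF assms(1), where g = "nontangential_max f"]) (auto intro: borel_open)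
  then show ?thesis using \<open>n > 0\<close> by simp
qed

lemma open_upper_half_plane: "open upper_half_plane"
  unfolding upper_half_plane_def using open_halfspace_Im_gt[of 0] by simp

lemma in_sets_if_upper_half_plane_borel:
  assumes "sets \<mu> = sets (restrict_space borel upper_half_plane)"
    and "B \<in> sets borel" "B \<subseteq> upper_half_plane"
  shows "B \<in> sets \<mu>"
  using assms open_upper_half_plane by (simp add: sets_restrict_space_iff)

lemma open_carleson_box:
  assumes "open C"
  shows "open (carleson_box C L)"
proof -
  have "carleson_box C L = Re -` C \<inter> {z. Im z > 0} \<inter> {z. Im z < L}"
    unfolding carleson_box_def by auto
  moreover have "open (Re -` C)" using assms by (intro continuous_open_vimage) (auto intro: continuous_intros)
  ultimately show ?thesis using open_halfspace_Im_gt[of 0] open_halfspace_Im_lt[of L] by (metis open_Int)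
qed

lemma carleson_box_subset_upper_half_plane: "carleson_box C L \<subseteq> upper_half_plane"
  unfolding carleson_box_def upper_half_plane_def by auto

definition tent :: "real set \<Rightarrow> complex set" where
  "tent U = {w. 0 < Im w \<and> {Re w - Im w<..<Re w + Im w} \<subseteq> U}"

lemma tent_subset_component_boxes:
  fixes U :: "real set"
  assumes U: "open U" "emeasure lborel U < \<infinity>"
  shows "tent U \<subseteq> (\<Union>C\<in>components U. carleson_box C (Sup C - Inf C))"
proof
  fix w assume "w \<in> tent U"
  then have w: "Im w > 0" "{Re w - Im w<..<Re w + Im w} \<subseteq> U" unfolding tent_def by auto
  define C where "C = connected_component_set U (Re w)"
  have "C \<in> components U" unfolding C_def using w by (intro componentsI) auto
  have "{Re w - Im w<..<Re w + Im w} \<subseteq> C"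
    unfolding C_def by (rule connected_component_maximal) (use w in auto)
  then have "Re w - 3/4 * Im w \<in> C" "Re w + 3/4 * Im w \<in> C" "Re w \<in> C" using w(1) by auto
  then have "Inf C \<le> Re w - 3/4 * Im w" "Re w + 3/4 * Im w \<le> Sup C"
    using component_finite_measure_interval(3)[OF U \<open>C \<in> components U\<close>] by auto
  then have "w \<in> carleson_box C (Sup C - Inf C)"
    unfolding carleson_box_def using w(1) \<open>Re w \<in> C\<close> by auto
  then show "w \<in> (\<Union>C\<in>components U. carleson_box C (Sup C - Inf C))"
    using \<open>C \<in> components U\<close> by blast
qed

lemma tent_eq_empty_if_null:
  assumes "U \<in> sets lborel" "emeasure lborel U = 0"
  shows "tent U = {}"
proof (rule ccontr)
  assume "tent U \<noteq> {}"
  then obtain w where "Im w > 0" "{Re w - Im w<..<Re w + Im w} \<subseteq> U" unfolding tent_def by auto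
  then have "emeasure lborel {Re w - Im w<..<Re w + Im w} \<le> emeasure lborel U"
    using assms(1) by (intro emeasure_mono)
  then show False using \<open>Im w > 0\<close> assms(2) by simp
qed

lemma level_set_subset_tent:
  "{z\<in>upper_half_plane. ereal (norm (f z)) > c} \<subseteq> tent {x. c < nontangential_max f x}"
proof
  fix w assume "w \<in> {z\<in>upper_half_plane. ereal (norm (f z)) > c}"
  then have "Im w > 0" "c < ereal (norm (f (Complex (Re w) (Im w))))"
    unfolding upper_half_plane_def by auto
  then show "w \<in> tent {x. c < nontangential_max f x}"
    unfolding tent_def using interval_subset_nontangential_max_level by blast
qed

section \<open>From the Carleson condition to the weak-type estimate\<close>

definition carleson_condition :: "(real \<Rightarrow> real) \<Rightarrow> (real \<Rightarrow> real) \<Rightarrow> complex measure \<Rightarrow> real \<Rightarrow> bool" where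
  "carleson_condition \<Phi>1 \<Phi>2 \<mu> C \<longleftrightarrow> (\<forall>a b I. a < b \<and> {a<..<b} \<subseteq> I \<and> I \<subseteq> {a..b} \<longrightarrow>
     emeasure \<mu> (carleson_box I (b - a)) \<le> ennreal (C / \<Phi>2 (growth_inv \<Phi>1 (1 / (b - a)))))"

lemma carleson_condition_component_box:
  fixes U :: "real set"
  assumes \<Phi>1: "growth_function \<Phi>1" "strict_mono_on {0..} \<Phi>1"
    and ratio: "mono_on {0<..} (\<lambda>t. \<Phi>2 t / \<Phi>1 t)" and pos2: "\<And>t. t > 0 \<Longrightarrow> \<Phi>2 t > 0"
    and "C \<ge> 0" and carleson: "carleson_condition \<Phi>1 \<Phi>2 \<mu> C"
    and U: "open U" "emeasure lborel U = ennreal S" "S > 0" and I: "I \<in> components U"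
  shows "emeasure \<mu> (carleson_box I (Sup I - Inf I))
    \<le> ennreal (C / (S * \<Phi>2 (growth_inv \<Phi>1 (1 / S)))) * emeasure lborel I"
proof -
  note interval = component_finite_measure_interval[OF U(1) _ I]
  define d where "d = Sup I - Inf I"
  have "d > 0" unfolding d_def using interval(1) U(2) by simp
  have "emeasure lborel I \<le> emeasure lborel U"
    using in_components_subset[OF I] U(1) by (intro emeasure_mono) auto
  then have "d \<le> S" using interval(4) U(2,3) unfolding d_def by simp
  have gauge: "S * \<Phi>2 (growth_inv \<Phi>1 (1 / S)) \<le> d * \<Phi>2 (growth_inv \<Phi>1 (1 / d))"
    by (rule carleson_gauge_antimono[OF \<Phi>1 ratio \<open>d > 0\<close> \<open>d \<le> S\<close>])
  have "\<Phi>2 (growth_inv \<Phi>1 (1 / S)) > 0" "\<Phi>2 (growth_inv \<Phi>1 (1 / d)) > 0"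
    using pos2 growth_inv_pos[OF \<Phi>1(1)] \<open>S > 0\<close> \<open>d > 0\<close> by simp_all
  have "emeasure \<mu> (carleson_box I d) \<le> ennreal (C / \<Phi>2 (growth_inv \<Phi>1 (1 / d)))"
    using carleson interval(1-3) U(2) unfolding carleson_condition_def d_def by simp
  also have "\<dots> \<le> ennreal (C / (S * \<Phi>2 (growth_inv \<Phi>1 (1 / S))) * d)"
  proof (rule ennreal_leI)
    have "C * (S * \<Phi>2 (growth_inv \<Phi>1 (1 / S))) \<le> C * (d * \<Phi>2 (growth_inv \<Phi>1 (1 / d)))"
      using gauge \<open>C \<ge> 0\<close> by (rule mult_left_mono)
    then show "C / \<Phi>2 (growth_inv \<Phi>1 (1 / d)) \<le> C / (S * \<Phi>2 (growth_inv \<Phi>1 (1 / S))) * d"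
      using \<open>S > 0\<close> \<open>\<Phi>2 (growth_inv \<Phi>1 (1 / S)) > 0\<close> \<open>\<Phi>2 (growth_inv \<Phi>1 (1 / d)) > 0\<close>
      by (simp add: field_simps)
  qed
  also have "\<dots> = ennreal (C / (S * \<Phi>2 (growth_inv \<Phi>1 (1 / S)))) * ennreal d"
    by (rule ennreal_mult) (use \<open>C \<ge> 0\<close> \<open>S > 0\<close> \<open>d > 0\<close> \<open>\<Phi>2 (growth_inv \<Phi>1 (1 / S)) > 0\<close> in simp_all)
  finally show ?thesis using interval(4) U(2) unfolding d_def by simp
qed

lemma carleson_condition_tent:
  fixes U :: "real set"
  assumes \<Phi>1: "growth_function \<Phi>1" "strict_mono_on {0..} \<Phi>1"
    and ratio: "mono_on {0<..} (\<lambda>t. \<Phi>2 t / \<Phi>1 t)" and pos2: "\<And>t. t > 0 \<Longrightarrow> \<Phi>2 t > 0"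
    and sets: "sets \<mu> = sets (restrict_space borel upper_half_plane)"
    and "C \<ge> 0" and carleson: "carleson_condition \<Phi>1 \<Phi>2 \<mu> C"
    and U: "open U" "emeasure lborel U = ennreal S" "S > 0" and "E \<subseteq> tent U"
  shows "emeasure \<mu> E \<le> ennreal (C / \<Phi>2 (growth_inv \<Phi>1 (1 / S)))"
proof -
  define box where "box I = carleson_box I (Sup I - Inf I)" for I
  define K where "K = C / (S * \<Phi>2 (growth_inv \<Phi>1 (1 / S)))"
  have "\<Phi>2 (growth_inv \<Phi>1 (1 / S)) > 0" using pos2 growth_inv_pos[OF \<Phi>1(1)] \<open>S > 0\<close> by simp
  then have "K \<ge> 0" unfolding K_def using \<open>S > 0\<close> \<open>C \<ge> 0\<close> by simp
  have box_sets: "box I \<in> sets \<mu>" if "I \<in> components U" for I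
    unfolding box_def using open_components[OF U(1) that] carleson_box_subset_upper_half_plane
    by (intro in_sets_if_upper_half_plane_borel[OF sets] borel_open open_carleson_box) auto
  have box_disjoint: "disjoint_family_on box (components U)"
    using components_nonoverlap unfolding disjoint_family_on_def box_def carleson_box_def by blast
  have "E \<subseteq> (\<Union>I\<in>components U. box I)"
    using \<open>E \<subseteq> tent U\<close> tent_subset_component_boxes[OF U(1)] U(2) unfolding box_def by auto
  moreover have "(\<Union>I\<in>components U. box I) \<in> sets \<mu>"
    using box_sets countable_components[OF U(1)] by (intro sets.countable_UN') auto
  ultimately have "emeasure \<mu> E \<le> emeasure \<mu> (\<Union>I\<in>components U. box I)"
    by (rule emeasure_mono)
  also have "\<dots> = (\<integral>\<^sup>+I. emeasure \<mu> (box I) \<partial>count_space (components U))"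
    by (rule emeasure_UN_countable[OF box_sets countable_components[OF U(1)] box_disjoint])
  also have "\<dots> \<le> (\<integral>\<^sup>+I. ennreal K * emeasure lborel I \<partial>count_space (components U))"
    unfolding box_def K_def
    by (intro nn_integral_mono carleson_condition_component_box[OF \<Phi>1 ratio pos2 \<open>C \<ge> 0\<close> carleson U(1-3)])
      simp_all
  also have "\<dots> = ennreal K * emeasure lborel U"
    by (simp add: nn_integral_cmult nn_integral_components_emeasure[OF U(1)])
  also have "\<dots> = ennreal (C / \<Phi>2 (growth_inv \<Phi>1 (1 / S)))"
    using U(2,3) \<open>K \<ge> 0\<close> by (simp add: K_def flip: ennreal_mult)
  finally show ?thesis .
qed

definition weak_type_embedding :: "(real \<Rightarrow> real) \<Rightarrow> (real \<Rightarrow> real) \<Rightarrow> complex measure \<Rightarrow> real \<Rightarrow> bool" where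
  "weak_type_embedding \<Phi>1 \<Phi>2 \<mu> C \<longleftrightarrow> (\<forall>f\<in>hardy_orlicz \<Phi>1. (\<exists>z\<in>upper_half_plane. f z \<noteq> 0) \<longrightarrow>
     (SUP l\<in>{0<..}. ennreal (\<Phi>2 l) * emeasure \<mu> {z\<in>upper_half_plane.
        ereal (norm (f z)) > ereal (C * l) * lux_norm \<Phi>1 (nontangential_max f)}) \<le> 1)"

lemma carleson_condition_level_set:
  assumes \<Phi>1: "growth_function \<Phi>1" "strict_mono_on {0..} \<Phi>1" "\<And>t. t > 0 \<Longrightarrow> \<Phi>1 t > 0"
    and \<Phi>2: "class_U \<Phi>2" and ratio: "mono_on {0<..} (\<lambda>t. \<Phi>2 t / \<Phi>1 t)"
    and sets: "sets \<mu> = sets (restrict_space borel upper_half_plane)"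
    and "C \<ge> 0" and carleson: "carleson_condition \<Phi>1 \<Phi>2 \<mu> C"
    and n: "lux_norm \<Phi>1 (nontangential_max f) = ereal n" "n > 0" and "l > 0"
  shows "emeasure \<mu> {z\<in>upper_half_plane. ereal (norm (f z)) > ereal (2 * n * (l * max 1 C))}
    \<le> ennreal (1 / \<Phi>2 l)" (is "emeasure \<mu> ?E \<le> _")
proof -
  define u where "u = l * max 1 C"
  define U where "U = {x. ereal (2 * n * u) < nontangential_max f x}"
  have "\<Phi>1 u > 0" unfolding u_def using \<Phi>1(3) \<open>l > 0\<close> by simp
  have "open U" unfolding U_def by (rule open_nontangential_max_level)
  have "?E \<subseteq> tent U" unfolding U_def u_def by (rule level_set_subset_tent)
  have Cheb: "ennreal (\<Phi>1 u) * emeasure lborel U \<le> 1"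
    unfolding U_def u_def using nontangential_max_level_measure[OF \<Phi>1(1) n] \<open>l > 0\<close> by simp
  then have "emeasure lborel U \<noteq> \<infinity>" using \<open>\<Phi>1 u > 0\<close> by (auto simp: ennreal_mult_top top_unique)
  then obtain S where S: "emeasure lborel U = ennreal S" "S \<ge> 0" by (cases "emeasure lborel U") auto
  show ?thesis
  proof (cases "S = 0")
    case True
    then have "?E = {}" using \<open>?E \<subseteq> tent U\<close> tent_eq_empty_if_null[of U] \<open>open U\<close> S(1) by auto
    then show ?thesis by (simp only: emeasure_empty zero_le)
  next
    case False
    have "ennreal (\<Phi>1 u * S) \<le> 1" using Cheb S \<open>\<Phi>1 u > 0\<close> by (simp add: ennreal_mult)
    then have "C * \<Phi>2 l \<le> \<Phi>2 (growth_inv \<Phi>1 (1 / S))"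
      using scaled_level_le_carleson_gauge[OF \<Phi>1(1,2) \<Phi>2 \<open>l > 0\<close>] False S(2)
      unfolding u_def by (simp add: ennreal_le_1)
    then have "C / \<Phi>2 (growth_inv \<Phi>1 (1 / S)) \<le> 1 / \<Phi>2 l"
      using class_U_pos[OF \<Phi>2] \<open>l > 0\<close> growth_inv_pos[OF \<Phi>1(1), of "1 / S"] False S(2)
      by (simp add: field_simps)
    moreover have "emeasure \<mu> ?E \<le> ennreal (C / \<Phi>2 (growth_inv \<Phi>1 (1 / S)))"
      using False S by (intro carleson_condition_tent[OF \<Phi>1(1,2) ratio class_U_pos[OF \<Phi>2] sets
            \<open>C \<ge> 0\<close> carleson \<open>open U\<close> _ _ \<open>?E \<subseteq> tent U\<close>]) auto
    ultimately show ?thesis by (meson ennreal_leI order_trans)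
  qed
qed

lemma carleson_condition_imp_weak_type_embedding:
  assumes \<Phi>1: "growth_function \<Phi>1" "convex_on {0..} \<Phi>1" "\<And>t. t > 0 \<Longrightarrow> \<Phi>1 t > 0"
    and \<Phi>2: "class_U \<Phi>2" and ratio: "mono_on {0<..} (\<lambda>t. \<Phi>2 t / \<Phi>1 t)"
    and sets: "sets \<mu> = sets (restrict_space borel upper_half_plane)"
    and "C \<ge> 0" and carleson: "carleson_condition \<Phi>1 \<Phi>2 \<mu> C"
  shows "weak_type_embedding \<Phi>1 \<Phi>2 \<mu> (2 * max 1 C)"
  unfolding weak_type_embedding_def
proof (intro ballI impI SUP_least)
  fix f :: "complex \<Rightarrow> complex" and l :: real
  assume "\<exists>z\<in>upper_half_plane. f z \<noteq> 0" "l \<in> {0<..}"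
  then have "l > 0" and "lux_norm \<Phi>1 (nontangential_max f) > 0"
    using lux_norm_nontangential_max_pos[OF \<Phi>1(1)] by auto
  let ?E = "\<lambda>N. {z\<in>upper_half_plane. ereal (norm (f z)) > ereal (2 * max 1 C * l) * N}"
  have "emeasure \<mu> (?E (lux_norm \<Phi>1 (nontangential_max f))) \<le> ennreal (1 / \<Phi>2 l)"
  proof (cases "lux_norm \<Phi>1 (nontangential_max f)")
    case (real n)
    then show ?thesis
      using carleson_condition_level_set[OF \<Phi>1(1) convex_growth_function_strict_mono[OF \<Phi>1] \<Phi>1(3)
          \<Phi>2 ratio sets \<open>C \<ge> 0\<close> carleson real] \<open>lux_norm \<Phi>1 (nontangential_max f) > 0\<close> \<open>l > 0\<close>
      by (simp add: ac_simps)
  next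
    case PInf
    then have "?E (lux_norm \<Phi>1 (nontangential_max f)) = {}" using \<open>l > 0\<close> by auto
    then show ?thesis by (simp only: emeasure_empty zero_le)
  qed (use \<open>lux_norm \<Phi>1 (nontangential_max f) > 0\<close> in simp)
  then show "ennreal (\<Phi>2 l) * emeasure \<mu> (?E (lux_norm \<Phi>1 (nontangential_max f))) \<le> 1"
    using ennreal_mult_le_1_iff class_U_pos[OF \<Phi>2 \<open>l > 0\<close>] by blast
qed

section \<open>From the weak-type estimate to the Carleson condition\<close>

definition carleson_test_fun :: "real \<Rightarrow> real \<Rightarrow> real \<Rightarrow> complex \<Rightarrow> complex" where
  "carleson_test_fun A L x0 z = complex_of_real (A * L\<^sup>2) / (z - Complex x0 (- L))\<^sup>2"

lemma norm_carleson_test_fun: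
  assumes "A \<ge> 0"
  shows "norm (carleson_test_fun A L x0 z) = A * L\<^sup>2 / ((Re z - x0)\<^sup>2 + (Im z + L)\<^sup>2)"
proof -
  have "norm (complex_of_real (A * L\<^sup>2)) = A * L\<^sup>2" using assms by (simp only: norm_of_real) simp
  then show ?thesis by (simp add: carleson_test_fun_def norm_divide norm_power cmod_power2)
qed

lemma holomorphic_carleson_test_fun:
  assumes "L > 0"
  shows "carleson_test_fun A L x0 holomorphic_on upper_half_plane"
proof -
  have "z - Complex x0 (- L) \<noteq> 0" if "z \<in> upper_half_plane" for z
    using that assms unfolding upper_half_plane_def by (auto simp: complex_eq_iff)
  then show ?thesis unfolding carleson_test_fun_def by (auto intro!: holomorphic_intros)
qed

lemma borel_measurable_carleson_test_fun [measurable]: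
  "carleson_test_fun A L x0 \<in> borel_measurable borel"
  unfolding carleson_test_fun_def by measurable

lemma norm_carleson_test_fun_le:
  assumes "A \<ge> 0" "L > 0" "Im z \<ge> 0"
  shows "norm (carleson_test_fun A L x0 z) \<le> A * cauchy_bump L x0 (Re z)"
proof -
  have "L\<^sup>2 \<le> (Im z + L)\<^sup>2" using assms by (simp add: power_mono)
  moreover have "(Re z - x0)\<^sup>2 + L\<^sup>2 > 0" using \<open>L > 0\<close> by (simp add: add_nonneg_pos)
  ultimately have "A * L\<^sup>2 / ((Re z - x0)\<^sup>2 + (Im z + L)\<^sup>2) \<le> A * L\<^sup>2 / ((Re z - x0)\<^sup>2 + L\<^sup>2)"
    using \<open>A \<ge> 0\<close> by (intro divide_left_mono mult_pos_pos) auto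
  then show ?thesis using assms(1) by (simp add: norm_carleson_test_fun cauchy_bump_def)
qed

lemma nontangential_max_carleson_test_fun_le:
  assumes "A \<ge> 0" "L > 0"
  shows "nontangential_max (carleson_test_fun A L x0) x \<le> ereal (4 * A * cauchy_bump L x0 x)"
  unfolding nontangential_max_def
proof (rule SUP_least, clarify)
  fix t y :: real assume "y > 0" "\<bar>t - x\<bar> < y"
  have "(x - x0)\<^sup>2 \<le> 2 * (t - x0)\<^sup>2 + 2 * (x - t)\<^sup>2"
    using zero_le_power2[of "2 * t - x0 - x"] by (simp add: power2_eq_square algebra_simps)
  moreover have "(x - t)\<^sup>2 \<le> y\<^sup>2" using \<open>\<bar>t - x\<bar> < y\<close> by (simp add: abs_le_square_iff[symmetric] abs_minus_commute)
  moreover have "y\<^sup>2 + L\<^sup>2 \<le> (y + L)\<^sup>2" using \<open>y > 0\<close> \<open>L > 0\<close> by (simp add: power2_eq_square algebra_simps)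
  ultimately have le: "(x - x0)\<^sup>2 + L\<^sup>2 \<le> 4 * ((t - x0)\<^sup>2 + (y + L)\<^sup>2)"
    using zero_le_power2[of "t - x0"] zero_le_power2[of L] zero_le_power2[of "y + L"] by (smt (verit))
  have "(x - x0)\<^sup>2 + L\<^sup>2 > 0" using \<open>L > 0\<close> by (simp add: add_nonneg_pos)
  have "A * L\<^sup>2 / ((t - x0)\<^sup>2 + (y + L)\<^sup>2) = 4 * A * L\<^sup>2 / (4 * ((t - x0)\<^sup>2 + (y + L)\<^sup>2))"
    by (simp only: mult.assoc mult_divide_mult_cancel_left_if) simp
  also have "\<dots> \<le> 4 * A * L\<^sup>2 / ((x - x0)\<^sup>2 + L\<^sup>2)"
    using assms le \<open>(x - x0)\<^sup>2 + L\<^sup>2 > 0\<close> by (intro divide_left_mono mult_pos_pos) auto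
  finally show "ereal (norm (carleson_test_fun A L x0 (Complex (fst (t, y)) (snd (t, y)))))
      \<le> ereal (4 * A * cauchy_bump L x0 x)"
    using assms(1) by (simp add: norm_carleson_test_fun cauchy_bump_def)
qed

lemma norm_carleson_test_fun_ge:
  assumes "A \<ge> 0" "L > 0" "\<bar>Re z - x0\<bar> \<le> L / 2" "0 < Im z" "Im z < L"
  shows "norm (carleson_test_fun A L x0 z) \<ge> 4 * A / 17"
proof -
  have "(Re z - x0)\<^sup>2 \<le> (L / 2)\<^sup>2" using assms(3) by (simp add: abs_le_square_iff[symmetric])
  moreover have "(Im z + L)\<^sup>2 \<le> (2 * L)\<^sup>2" using assms(4,5) by (intro power_mono) auto
  ultimately have "(Re z - x0)\<^sup>2 + (Im z + L)\<^sup>2 \<le> 17/4 * L\<^sup>2" by (simp add: power2_eq_square)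
  moreover have "(Re z - x0)\<^sup>2 + (Im z + L)\<^sup>2 > 0" using assms(2,4) by (simp add: add_nonneg_pos)
  ultimately have "A * L\<^sup>2 / (17/4 * L\<^sup>2) \<le> A * L\<^sup>2 / ((Re z - x0)\<^sup>2 + (Im z + L)\<^sup>2)"
    using assms(1) by (intro divide_left_mono mult_pos_pos) auto
  then show ?thesis using assms(1,2) by (simp add: norm_carleson_test_fun)
qed

lemma carleson_test_fun_in_hardy_orlicz:
  assumes \<Phi>: "growth_function \<Phi>" "convex_on {0..} \<Phi>" and "L > 0" "A \<ge> 0" "\<Phi> A = 1 / L"
  shows "carleson_test_fun A L x0 \<in> hardy_orlicz \<Phi>"
proof -
  let ?f = "carleson_test_fun A L x0"
  have "lux \<Phi> (\<lambda>x. ?f (complex_of_real x + \<i> * complex_of_real y)) \<le> ereal (4 * 1)" if "y > 0" for y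
    unfolding lux_def
  proof (rule lux_norm_le_cauchy_bump[OF \<Phi> assms(3-5)])
    show "0 \<le> ereal (norm (?f (complex_of_real x + \<i> * complex_of_real y))) \<and>
        ereal (norm (?f (complex_of_real x + \<i> * complex_of_real y))) \<le> ereal (1 * A * cauchy_bump L x0 x)" for x
      using norm_carleson_test_fun_le[OF assms(4,3), of "complex_of_real x + \<i> * complex_of_real y" x0] \<open>y > 0\<close>
      by simp
  qed simp
  then have "(SUP y\<in>{0<..}. lux \<Phi> (\<lambda>x. ?f (complex_of_real x + \<i> * complex_of_real y))) \<le> ereal 4"
    by (intro SUP_least) auto
  then show ?thesis
    unfolding hardy_orlicz_def using holomorphic_carleson_test_fun[OF \<open>L > 0\<close>] by (auto intro: le_less_trans)
qed

lemma lux_norm_nontangential_max_carleson_test_fun: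
  assumes \<Phi>: "growth_function \<Phi>" "convex_on {0..} \<Phi>" and "L > 0" "A \<ge> 0" "\<Phi> A = 1 / L"
  shows "lux_norm \<Phi> (nontangential_max (carleson_test_fun A L x0)) \<le> 16"
  using lux_norm_le_cauchy_bump[OF \<Phi> assms(3-5), of 4 "nontangential_max (carleson_test_fun A L x0)" x0]
    nontangential_max_nonneg nontangential_max_carleson_test_fun_le[OF assms(4,3)] by simp

lemma carleson_test_fun_nonzero:
  assumes "A > 0" "L > 0"
  shows "\<exists>z\<in>upper_half_plane. carleson_test_fun A L x0 z \<noteq> 0"
proof
  show "\<i> \<in> upper_half_plane" unfolding upper_half_plane_def by simp
  have "norm (carleson_test_fun A L x0 \<i>) > 0"
    using assms by (simp add: norm_carleson_test_fun add_nonneg_pos)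
  then show "carleson_test_fun A L x0 \<i> \<noteq> 0" by auto
qed

text \<open>On \<open>Q\<^sub>I\<close> the test function is at least \<open>4A/17 > A/5 \<ge> 16 C A / t\<close>.\<close>
lemma carleson_box_subset_test_fun_level:
  assumes "a < b" "I \<subseteq> {a..b}" "A > 0" "C > 0" "t \<ge> 80 * C" "N \<le> 16"
  shows "carleson_box I (b - a) \<subseteq> {z\<in>upper_half_plane.
    ereal (norm (carleson_test_fun A (b - a) ((a + b) / 2) z)) > ereal (C * (A / t)) * N}"
proof
  fix z assume "z \<in> carleson_box I (b - a)"
  then have "Re z \<in> {a..b}" "0 < Im z" "Im z < b - a" using assms(2) unfolding carleson_box_def by auto
  then have z: "\<bar>Re z - (a + b) / 2\<bar> \<le> (b - a) / 2" "0 < Im z" "Im z < b - a"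
    by (auto simp: abs_le_iff field_simps)
  have "t > 0" using assms(4,5) by simp
  have "ereal (C * (A / t)) * N \<le> ereal (16 * C * (A / t))"
    using assms(3,4,6) \<open>t > 0\<close> ereal_mult_left_mono[of N 16 "ereal (C * (A / t))"] by (simp add: ac_simps)
  also have "16 * C * (A / t) \<le> A / 5"
    using assms(3-5) \<open>t > 0\<close> by (simp add: field_simps)
  also have "A / 5 < norm (carleson_test_fun A (b - a) ((a + b) / 2) z)"
    using norm_carleson_test_fun_ge[of A, OF _ _ z] assms(1,3) by simp
  finally show "z \<in> {z\<in>upper_half_plane.
      ereal (norm (carleson_test_fun A (b - a) ((a + b) / 2) z)) > ereal (C * (A / t)) * N}"
    using z(2) unfolding upper_half_plane_def by auto
qed

lemma weak_type_embedding_carleson_box: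
  assumes \<Phi>1: "growth_function \<Phi>1" "convex_on {0..} \<Phi>1"
    and sets: "sets \<mu> = sets (restrict_space borel upper_half_plane)"
    and "C > 0" and weak: "weak_type_embedding \<Phi>1 \<Phi>2 \<mu> C" and "t \<ge> 80 * C"
    and I: "a < b" "I \<subseteq> {a..b}"
  shows "ennreal (\<Phi>2 (growth_inv \<Phi>1 (1 / (b - a)) / t)) * emeasure \<mu> (carleson_box I (b - a)) \<le> 1"
proof -
  define A where "A = growth_inv \<Phi>1 (1 / (b - a))"
  define f where "f = carleson_test_fun A (b - a) ((a + b) / 2)"
  define T where "T l = {z\<in>upper_half_plane. ereal (norm (f z)) > ereal (C * l) * lux_norm \<Phi>1 (nontangential_max f)}"
    for l
  have "A > 0" "\<Phi>1 A = 1 / (b - a)" "A / t > 0"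
    using I(1) \<open>C > 0\<close> \<open>t \<ge> 80 * C\<close> growth_inv_pos[OF \<Phi>1(1)] growth_inv_inverse[OF \<Phi>1(1)]
    unfolding A_def by auto
  have "f \<in> hardy_orlicz \<Phi>1" "\<exists>z\<in>upper_half_plane. f z \<noteq> 0"
    unfolding f_def using carleson_test_fun_in_hardy_orlicz[OF \<Phi>1] carleson_test_fun_nonzero
      \<open>A > 0\<close> \<open>\<Phi>1 A = 1 / (b - a)\<close> I(1) by auto
  with weak have "(SUP l\<in>{0<..}. ennreal (\<Phi>2 l) * emeasure \<mu> (T l)) \<le> 1"
    unfolding weak_type_embedding_def T_def by blast
  then have "ennreal (\<Phi>2 (A / t)) * emeasure \<mu> (T (A / t)) \<le> 1"
    using \<open>A / t > 0\<close> by (meson SUP_upper greaterThan_iff order_trans)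
  moreover have "emeasure \<mu> (carleson_box I (b - a)) \<le> emeasure \<mu> (T (A / t))"
  proof (rule emeasure_mono)
    show "carleson_box I (b - a) \<subseteq> T (A / t)"
      unfolding T_def f_def using lux_norm_nontangential_max_carleson_test_fun[OF \<Phi>1] I \<open>A > 0\<close>
        \<open>\<Phi>1 A = 1 / (b - a)\<close> \<open>C > 0\<close> \<open>t \<ge> 80 * C\<close>
      by (intro carleson_box_subset_test_fun_level) auto
    show "T (A / t) \<in> sets \<mu>"
      unfolding T_def f_def using open_upper_half_plane
      by (intro in_sets_if_upper_half_plane_borel[OF sets]) auto
  qed
  ultimately show ?thesis unfolding A_def by (meson mult_left_mono order_trans zero_le)
qed

lemma weak_type_embedding_imp_carleson_condition:
  assumes \<Phi>1: "growth_function \<Phi>1" "convex_on {0..} \<Phi>1" and \<Phi>2: "class_U \<Phi>2"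
    and sets: "sets \<mu> = sets (restrict_space borel upper_half_plane)"
    and "C > 0" and weak: "weak_type_embedding \<Phi>1 \<Phi>2 \<mu> C"
  shows "\<exists>C1>0. carleson_condition \<Phi>1 \<Phi>2 \<mu> C1"
proof -
  obtain K q where "K > 0" and growth: "\<And>s t. s > 0 \<Longrightarrow> t \<ge> 1 \<Longrightarrow> \<Phi>2 (s * t) \<le> K * t powr q * \<Phi>2 s"
    using \<Phi>2 unfolding class_U_def class_U_q_def by blast
  define t where "t = max 1 (80 * C)"
  have "t \<ge> 1" "t \<ge> 80 * C" unfolding t_def by auto
  have "carleson_condition \<Phi>1 \<Phi>2 \<mu> (K * t powr q)"
    unfolding carleson_condition_def
  proof (intro allI impI, elim conjE)
    fix a b :: real and I assume "a < b" "I \<subseteq> {a..b}"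
    define A where "A = growth_inv \<Phi>1 (1 / (b - a))"
    have "A > 0" unfolding A_def using growth_inv_pos[OF \<Phi>1(1)] \<open>a < b\<close> by simp
    then have "A / t > 0" "\<Phi>2 (A / t) > 0" "\<Phi>2 A > 0"
      using \<open>t \<ge> 1\<close> class_U_pos[OF \<Phi>2] by auto
    have "\<Phi>2 A \<le> K * t powr q * \<Phi>2 (A / t)"
      using growth[OF \<open>A / t > 0\<close> \<open>t \<ge> 1\<close>] \<open>t \<ge> 1\<close> by simp
    then have "1 / \<Phi>2 (A / t) \<le> K * t powr q / \<Phi>2 A"
      using \<open>\<Phi>2 (A / t) > 0\<close> \<open>\<Phi>2 A > 0\<close> by (simp add: field_simps)
    moreover have "emeasure \<mu> (carleson_box I (b - a)) \<le> ennreal (1 / \<Phi>2 (A / t))"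
      using weak_type_embedding_carleson_box[OF \<Phi>1 sets \<open>C > 0\<close> weak \<open>t \<ge> 80 * C\<close> \<open>a < b\<close> \<open>I \<subseteq> {a..b}\<close>]
        ennreal_mult_le_1_iff[OF \<open>\<Phi>2 (A / t) > 0\<close>] unfolding A_def by blast
    ultimately show "emeasure \<mu> (carleson_box I (b - a)) \<le> ennreal (K * t powr q / \<Phi>2 (growth_inv \<Phi>1 (1 / (b - a))))"
      unfolding A_def by (meson ennreal_leI order_trans)
  qed
  moreover have "K * t powr q > 0" using \<open>K > 0\<close> \<open>t \<ge> 1\<close> by simp
  ultimately show ?thesis by blast
qed

theorem theorem7p1:
  fixes \<Phi>1 \<Phi>2 :: "real \<Rightarrow> real" and \<mu> :: "complex measure"
  assumes "growth_function \<Phi>1" "convex_on {0..} \<Phi>1" "C1_on_nonneg \<Phi>1"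
    and "growth_function \<Phi>2" "convex_on {0..} \<Phi>2" "C1_on_nonneg \<Phi>2"
    and "class_U \<Phi>2"
    and "nabla2 \<Phi>1"
    and "mono_on {0<..} (\<lambda>t. \<Phi>2 t / \<Phi>1 t)"
    and "sets \<mu> = sets (restrict_space borel upper_half_plane)"
  shows "(\<exists>C1>0. \<forall>a b I. a < b \<and> {a<..<b} \<subseteq> I \<and> I \<subseteq> {a..b} \<longrightarrow>
            emeasure \<mu> (carleson_box I (b - a))
              \<le> ennreal (C1 / \<Phi>2 (growth_inv \<Phi>1 (1 / (b - a)))))
     \<longleftrightarrow>
     (\<exists>C2>0. \<forall>f\<in>hardy_orlicz \<Phi>1. (\<exists>z\<in>upper_half_plane. f z \<noteq> 0) \<longrightarrow>
            (SUP l\<in>{0<..}. ennreal (\<Phi>2 l) *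
               emeasure \<mu> {z\<in>upper_half_plane.
                  ereal (norm (f z)) > ereal (C2 * l) * lux_norm \<Phi>1 (nontangential_max f)}) \<le> 1)"
proof -
  have pos1: "\<And>t. t > 0 \<Longrightarrow> \<Phi>1 t > 0" using nabla2_pos assms(1,8) by blast
  have "(\<exists>C1>0. carleson_condition \<Phi>1 \<Phi>2 \<mu> C1) \<longleftrightarrow> (\<exists>C2>0. weak_type_embedding \<Phi>1 \<Phi>2 \<mu> C2)"
  proof
    assume "\<exists>C1>0. carleson_condition \<Phi>1 \<Phi>2 \<mu> C1"
    then obtain C1 where "C1 > 0" "carleson_condition \<Phi>1 \<Phi>2 \<mu> C1" by blast
    then have "weak_type_embedding \<Phi>1 \<Phi>2 \<mu> (2 * max 1 C1)"
      using carleson_condition_imp_weak_type_embedding[OF assms(1,2) pos1 assms(7,9,10)] by simp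
    then show "\<exists>C2>0. weak_type_embedding \<Phi>1 \<Phi>2 \<mu> C2" by (intro exI[of _ "2 * max 1 C1"]) simp
  next
    assume "\<exists>C2>0. weak_type_embedding \<Phi>1 \<Phi>2 \<mu> C2"
    then show "\<exists>C1>0. carleson_condition \<Phi>1 \<Phi>2 \<mu> C1"
      using weak_type_embedding_imp_carleson_condition[OF assms(1,2,7,10)] by blast
  qed
  then show ?thesis unfolding carleson_condition_def weak_type_embedding_def .
qed

end
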